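(* Let $f$ be a transcendental meromorphic function projectable via $\exp_1$, written as $f(z)=\ell z+\Phi(e^{2\pi iz})$ with $\ell\in\mathbb{Z}$ and $\Phi$ meromorphic in $\mathbb{C}^*$, and let $g$ be its exponential projection. Then $z^*$ is a pseudoperiodic point of $f$ of minimal type $(p,\sigma)$, where $p\ge1$ and $\sigma\in\mathbb{Z}$, if and only if $e^{2\pi iz^*}$ is a periodic point of $g$ of minimal period $p$. In this case $z^*$ is a solution of $$(\ell^p-1)z+\sum_{j=0}^{p-1}\ell^{p-1-j}\,\Phi\big(g^j(e^{2\pi iz})\big)=\sigma.$$
   Context: $\exp_1(z)=e^{2\pi iz}$; $f$ is projectable via $\exp_1$ if there is $g$ with $g\circ\exp_1=\exp_1\circ f$ wherever defined; then $g(w)=w^\ell e^{2\pi i\Phi(w)}$. A point $z^*\in\mathbb{C}\setminus f^{-1}(\infty)$ is a pseudoperiodic point of type $(p,\sigma)$ of $f$ if $f^p(z^* )=z^*+\sigma$ for some $p\ge1$, $\sigma\in\mathbb{Z}$; it is of minimal type $(p,\sigma)$ if $p$ is the smallest natural number with this property. *)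

theory Defs
  imports "HOL-Complex_Analysis.Complex_Analysis" "HOL-Computational_Algebra.Polynomial"
begin

definition exp1 :: "complex \<Rightarrow> complex" where
  "exp1 z = exp (2 * of_real pi * \<i> * z)"

definition fin_pts :: "(complex \<Rightarrow> complex) \<Rightarrow> complex set" where
  "fin_pts \<Phi> = {w. w \<noteq> 0 \<and> \<not> is_pole \<Phi> w}"

definition transcendental_mero :: "(complex \<Rightarrow> complex) \<Rightarrow> complex set \<Rightarrow> bool" where
  "transcendental_mero f D \<longleftrightarrow>
     \<not> (\<exists>P Q :: complex poly. Q \<noteq> 0 \<and> (\<forall>z\<in>D. poly Q z \<noteq> 0 \<longrightarrow> f z = poly P z / poly Q z))"

definition pseudoperiodic_type ::
  "(complex \<Rightarrow> complex) \<Rightarrow> complex set \<Rightarrow> complex \<Rightarrow> nat \<Rightarrow> int \<Rightarrow> bool" where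
  "pseudoperiodic_type f D z p \<sigma> \<longleftrightarrow>
     p \<ge> 1 \<and> (\<forall>j<p. (f ^^ j) z \<in> D) \<and> (f ^^ p) z = z + of_int \<sigma>"

definition minimal_pseudoperiodic_type ::
  "(complex \<Rightarrow> complex) \<Rightarrow> complex set \<Rightarrow> complex \<Rightarrow> nat \<Rightarrow> int \<Rightarrow> bool" where
  "minimal_pseudoperiodic_type f D z p \<sigma> \<longleftrightarrow>
     pseudoperiodic_type f D z p \<sigma> \<and>
     (\<forall>q. 1 \<le> q \<and> q < p \<longrightarrow> \<not> (\<exists>\<tau>. pseudoperiodic_type f D z q \<tau>))"

definition periodic_min_period ::
  "(complex \<Rightarrow> complex) \<Rightarrow> complex set \<Rightarrow> complex \<Rightarrow> nat \<Rightarrow> bool" where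
  "periodic_min_period g D w p \<longleftrightarrow>
     p \<ge> 1 \<and> (\<forall>j<p. (g ^^ j) w \<in> D) \<and> (g ^^ p) w = w \<and>
     (\<forall>q. 1 \<le> q \<and> q < p \<longrightarrow> (g ^^ q) w \<noteq> w)"

end

theory Submission
  imports Defs
begin

text \<open>Since exp1 (l z + c) = exp1 z ^ l * exp (2 pi i c), the map \<open>exp1\<close> semiconjugates \<open>f\<close>
  to \<open>g\<close> wherever \<open>\<Phi>\<close> is finite. Hence \<open>exp1\<close> maps \<open>f\<close>-orbits to \<open>g\<close>-orbits, and since the
  fibres of \<open>exp1\<close> are exactly the cosets of \<open>\<int>\<close>, f^q z = z + \<sigma> for some integer \<open>\<sigma>\<close> iff
  g^q (exp1 z) = exp1 z; this matches the minimal types with the minimal periods.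
  Unrolling the affine recursion f^(j+1) z = l f^j z + \<Phi> (g^j (exp1 z)) up to j = p gives the
  equation for \<open>z\<close>.\<close>

lemma exp1_eq_iff: "exp1 a = exp1 b \<longleftrightarrow> (\<exists>k::int. a = b + of_int k)"
proof
  assume "exp1 a = exp1 b"
  then obtain n :: int
    where "2 * of_real pi * \<i> * a = 2 * of_real pi * \<i> * b + (of_int (2 * n) * pi) * \<i>"
    unfolding exp1_def exp_eq by blast
  then have "2 * of_real pi * \<i> * a = 2 * of_real pi * \<i> * (b + of_int n)"
    by (simp add: algebra_simps)
  then show "\<exists>k::int. a = b + of_int k" by auto
next
  assume "\<exists>k::int. a = b + of_int k"
  then obtain k :: int where "a = b + of_int k" ..
  have "exp1 (b + of_int k) = exp1 b * exp (of_int k * (2 * of_real pi * \<i>))"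
    unfolding exp1_def by (simp add: algebra_simps exp_add)
  also have "exp (of_int k * (2 * of_real pi * \<i>)) = 1"
    using exp_power_int[of "2 * of_real pi * \<i>" k] by simp
  finally show "exp1 a = exp1 b" using \<open>a = b + of_int k\<close> by simp
qed

lemma exp1_affine:
  "exp1 (of_int l * z + c) = exp1 z powi l * exp (2 * of_real pi * \<i> * c)"
proof -
  have "exp1 (of_int l * z + c)
      = exp (of_int l * (2 * of_real pi * \<i> * z)) * exp (2 * of_real pi * \<i> * c)"
    unfolding exp1_def by (simp add: algebra_simps exp_add[symmetric])
  then show ?thesis unfolding exp1_def by (simp add: exp_power_int)
qed

lemma funpow_semiconj:
  assumes semiconj: "\<And>x. h x \<in> E \<Longrightarrow> h (f x) = g (h x)"
    and orbit: "\<forall>i<j. h ((f ^^ i) z) \<in> E"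
  shows "h ((f ^^ j) z) = (g ^^ j) (h z)"
  using orbit
proof (induction j)
  case 0
  then show ?case by simp
next
  case (Suc j)
  have "h ((f ^^ j) z) \<in> E" using Suc.prems by simp
  with Suc show ?case using semiconj by simp
qed

lemma funpow_semiconj_orbit_iff:
  assumes semiconj: "\<And>x. h x \<in> E \<Longrightarrow> h (f x) = g (h x)"
  shows "(\<forall>i<j. h ((f ^^ i) z) \<in> E) \<longleftrightarrow> (\<forall>i<j. (g ^^ i) (h z) \<in> E)"
proof (induction j)
  case 0
  then show ?case by simp
next
  case (Suc j)
  have "h ((f ^^ j) z) = (g ^^ j) (h z)"
    if "\<forall>i<j. h ((f ^^ i) z) \<in> E" using funpow_semiconj[OF semiconj that] .
  with Suc.IH show ?case by (auto simp: less_Suc_eq)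
qed

lemma linear_recurrence_closed_form:
  fixes x b :: "nat \<Rightarrow> 'a::comm_ring_1"
  assumes "\<And>i. i < j \<Longrightarrow> x (Suc i) = a * x i + b i"
  shows "x j = a ^ j * x 0 + (\<Sum>i<j. a ^ (j - 1 - i) * b i)"
  using assms
proof (induction j)
  case 0
  then show ?case by simp
next
  case (Suc j)
  have "a * (\<Sum>i<j. a ^ (j - 1 - i) * b i) = (\<Sum>i<j. a ^ (Suc j - 1 - i) * b i)"
    unfolding sum_distrib_left
  proof (rule sum.cong)
    fix i assume "i \<in> {..<j}"
    then have "Suc j - 1 - i = Suc (j - 1 - i)" by auto
    then show "a * (a ^ (j - 1 - i) * b i) = a ^ (Suc j - 1 - i) * b i" by simp
  qed simp
  with Suc show ?case by (simp add: algebra_simps)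
qed

lemma ex_pseudoperiodic_type_iff:
  assumes semiconj: "\<And>x. exp1 x \<in> E \<Longrightarrow> exp1 (f x) = g (exp1 x)"
  shows "(\<exists>\<tau>. pseudoperiodic_type f {z. exp1 z \<in> E} z q \<tau>) \<longleftrightarrow>
    q \<ge> 1 \<and> (\<forall>j<q. (g ^^ j) (exp1 z) \<in> E) \<and> (g ^^ q) (exp1 z) = exp1 z"
proof -
  have orbit_iff: "(\<forall>j<q. exp1 ((f ^^ j) z) \<in> E) \<longleftrightarrow> (\<forall>j<q. (g ^^ j) (exp1 z) \<in> E)"
    using semiconj by (rule funpow_semiconj_orbit_iff)
  have returns: "(\<exists>\<tau>::int. (f ^^ q) z = z + of_int \<tau>) \<longleftrightarrow> (g ^^ q) (exp1 z) = exp1 z"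
    if "\<forall>j<q. exp1 ((f ^^ j) z) \<in> E"
  proof -
    have "(\<exists>\<tau>::int. (f ^^ q) z = z + of_int \<tau>) \<longleftrightarrow> exp1 ((f ^^ q) z) = exp1 z"
      by (rule exp1_eq_iff[symmetric])
    also have "exp1 ((f ^^ q) z) = (g ^^ q) (exp1 z)"
      using semiconj that by (rule funpow_semiconj)
    finally show ?thesis .
  qed
  show ?thesis
    unfolding pseudoperiodic_type_def mem_Collect_eq using orbit_iff returns by blast
qed

lemma ex_minimal_pseudoperiodic_type_iff:
  assumes semiconj: "\<And>x. exp1 x \<in> E \<Longrightarrow> exp1 (f x) = g (exp1 x)"
  shows "(\<exists>\<tau>. minimal_pseudoperiodic_type f {z. exp1 z \<in> E} z p \<tau>) \<longleftrightarrow>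
    periodic_min_period g E (exp1 z) p"
proof -
  have returns_iff: "(\<exists>\<tau>. pseudoperiodic_type f {z. exp1 z \<in> E} z q \<tau>) \<longleftrightarrow>
      q \<ge> 1 \<and> (\<forall>j<q. (g ^^ j) (exp1 z) \<in> E) \<and> (g ^^ q) (exp1 z) = exp1 z" for q
    using semiconj by (rule ex_pseudoperiodic_type_iff)
  have "(\<exists>\<tau>. minimal_pseudoperiodic_type f {z. exp1 z \<in> E} z p \<tau>) \<longleftrightarrow>
      (\<exists>\<tau>. pseudoperiodic_type f {z. exp1 z \<in> E} z p \<tau>) \<and>
      (\<forall>q. 1 \<le> q \<and> q < p \<longrightarrow> \<not> (\<exists>\<tau>. pseudoperiodic_type f {z. exp1 z \<in> E} z q \<tau>))"
    unfolding minimal_pseudoperiodic_type_def by blast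
  also have "\<dots> \<longleftrightarrow> periodic_min_period g E (exp1 z) p"
    unfolding returns_iff periodic_min_period_def by auto
  finally show ?thesis .
qed

theorem lemma4p3:
  fixes f g \<Phi> :: "complex \<Rightarrow> complex" and l :: int
    and z :: complex and p :: nat and \<sigma> :: int
  assumes mero: "\<Phi> nicely_meromorphic_on (- {0})"
    and hf: "\<And>z. f z = of_int l * z + \<Phi> (exp1 z)"
    and hg: "\<And>w. w \<in> fin_pts \<Phi> \<Longrightarrow> g w = w powi l * exp (2 * of_real pi * \<i> * \<Phi> w)"
    and transc: "transcendental_mero f {z. exp1 z \<in> fin_pts \<Phi>}"
    and p: "p \<ge> 1"
  shows "((\<exists>\<tau>. minimal_pseudoperiodic_type f {z. exp1 z \<in> fin_pts \<Phi>} z p \<tau>) \<longleftrightarrow>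
           periodic_min_period g (fin_pts \<Phi>) (exp1 z) p)
         \<and> (minimal_pseudoperiodic_type f {z. exp1 z \<in> fin_pts \<Phi>} z p \<sigma> \<longrightarrow>
           (of_int l ^ p - 1) * z
             + (\<Sum>j<p. of_int l ^ (p - 1 - j) * \<Phi> ((g ^^ j) (exp1 z))) = of_int \<sigma>)"
proof (intro conjI impI)
  have semiconj: "exp1 (f x) = g (exp1 x)" if "exp1 x \<in> fin_pts \<Phi>" for x
    using hf hg[OF that] exp1_affine by simp
  then show "(\<exists>\<tau>. minimal_pseudoperiodic_type f {z. exp1 z \<in> fin_pts \<Phi>} z p \<tau>) \<longleftrightarrow>
      periodic_min_period g (fin_pts \<Phi>) (exp1 z) p"
    by (rule ex_minimal_pseudoperiodic_type_iff)
  assume "minimal_pseudoperiodic_type f {z. exp1 z \<in> fin_pts \<Phi>} z p \<sigma>"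
  then have orbit: "\<forall>j<p. exp1 ((f ^^ j) z) \<in> fin_pts \<Phi>" and ret: "(f ^^ p) z = z + of_int \<sigma>"
    unfolding minimal_pseudoperiodic_type_def pseudoperiodic_type_def by auto
  have "(f ^^ Suc i) z = of_int l * (f ^^ i) z + \<Phi> ((g ^^ i) (exp1 z))" if "i < p" for i
  proof -
    have "exp1 ((f ^^ i) z) = (g ^^ i) (exp1 z)"
      using semiconj by (rule funpow_semiconj) (use orbit that in auto)
    then show ?thesis by (simp add: hf)
  qed
  then have "(f ^^ p) z = of_int l ^ p * z + (\<Sum>j<p. of_int l ^ (p - 1 - j) * \<Phi> ((g ^^ j) (exp1 z)))"
    using linear_recurrence_closed_form[where x = "\<lambda>i. (f ^^ i) z" and j = p] by simp
  with ret show "(of_int l ^ p - 1) * z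
      + (\<Sum>j<p. of_int l ^ (p - 1 - j) * \<Phi> ((g ^^ j) (exp1 z))) = of_int \<sigma>"
    by (simp add: algebra_simps)
qed

end
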